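(* Let $M$ be a matroid with ground set $E(M)$, let $\Gamma$ be an abelian group and let $\psi\colon E(M)\to\Gamma$ be a labeling. The following are equivalent: (i) all bases of $M$ have the same label; (ii) $M$ has a basis $B$ such that $\psi(B')=\psi(B)$ for every basis $B'$ of $M$ with $|B\setminus B'|\le 1$; (iii) $\psi$ is constant on each connected component of $M$.
   Context: All groups are abelian and written additively. For a labeling $\psi\colon E\to\Gamma$ and $S\subseteq E$, $\psi(S):=\sum_{x\in S}\psi(x)$ is the label of $S$. The connected components of a matroid are the classes of the equivalence relation on $E(M)$ in which $x\sim y$ iff $x=y$ or $x$ and $y$ lie in a common circuit. *)

theory Defs
  imports Main
begin

definition matroid :: "'a set \<Rightarrow> ('a set \<Rightarrow> bool) \<Rightarrow> bool" where
  "matroid E indep \<longleftrightarrow>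
     finite E \<and>
     (\<forall>X. indep X \<longrightarrow> X \<subseteq> E) \<and>
     indep {} \<and>
     (\<forall>X Y. indep X \<and> Y \<subseteq> X \<longrightarrow> indep Y) \<and>
     (\<forall>X Y. indep X \<and> indep Y \<and> card X < card Y \<longrightarrow>
        (\<exists>e \<in> Y - X. indep (insert e X)))"

definition basis :: "'a set \<Rightarrow> ('a set \<Rightarrow> bool) \<Rightarrow> 'a set \<Rightarrow> bool" where
  "basis E indep B \<longleftrightarrow> indep B \<and> (\<forall>X. indep X \<and> B \<subseteq> X \<longrightarrow> X = B)"

definition circuit :: "'a set \<Rightarrow> ('a set \<Rightarrow> bool) \<Rightarrow> 'a set \<Rightarrow> bool" where
  "circuit E indep C \<longleftrightarrow> C \<subseteq> E \<and> \<not> indep C \<and> (\<forall>x\<in>C. indep (C - {x}))"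

definition same_component :: "'a set \<Rightarrow> ('a set \<Rightarrow> bool) \<Rightarrow> 'a \<Rightarrow> 'a \<Rightarrow> bool" where
  "same_component E indep x y \<longleftrightarrow>
     x \<in> E \<and> y \<in> E \<and> (x = y \<or> (\<exists>C. circuit E indep C \<and> x \<in> C \<and> y \<in> C))"

definition components :: "'a set \<Rightarrow> ('a set \<Rightarrow> bool) \<Rightarrow> 'a set set" where
  "components E indep = {{y. same_component E indep x y} | x. x \<in> E}"

definition label :: "('a \<Rightarrow> 'g::ab_group_add) \<Rightarrow> 'a set \<Rightarrow> 'g" where
  "label \<psi> S = (\<Sum>x\<in>S. \<psi> x)"

end

theory Submission
  imports Defs
begin

text \<open>
  Call \<psi> monochromatic on fundamental circuits of a basis B if every fundamental circuit
  C(e, B) carries a single label. Condition (ii) gives this for its basis B, since the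
  bases B' with |B - B'| = 1 are the exchanges B - f + e with f \<in> C(e, B). By circuit
  elimination the property survives a basis exchange, so it holds for every basis; as every
  circuit is a fundamental circuit of some basis, \<psi> is then constant on circuits, which is (iii).
  Conversely, if \<psi> is constant on circuits, exchanges along fundamental circuits do not change
  the label, and any basis is reached from any other by such exchanges, giving (i).
\<close>

definition fundamental_circuits_monochromatic ::
    "'a set \<Rightarrow> ('a set \<Rightarrow> bool) \<Rightarrow> ('a \<Rightarrow> 'g) \<Rightarrow> 'a set \<Rightarrow> bool" where
  "fundamental_circuits_monochromatic E indep \<psi> B \<longleftrightarrow>
     (\<forall>e \<in> E - B. \<forall>C. circuit E indep C \<and> C \<subseteq> insert e B \<longrightarrow> (\<forall>f \<in> C. \<psi> f = \<psi> e))"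

definition circuits_monochromatic :: "'a set \<Rightarrow> ('a set \<Rightarrow> bool) \<Rightarrow> ('a \<Rightarrow> 'g) \<Rightarrow> bool" where
  "circuits_monochromatic E indep \<psi> \<longleftrightarrow>
     (\<forall>C. circuit E indep C \<longrightarrow> (\<forall>x \<in> C. \<forall>y \<in> C. \<psi> x = \<psi> y))"

lemma label_exchange:
  fixes \<psi> :: "'a \<Rightarrow> 'g::ab_group_add"
  assumes "finite B" "f \<in> B" "e \<notin> B"
  shows "label \<psi> (insert e (B - {f})) = label \<psi> B - \<psi> f + \<psi> e"
  using assms unfolding label_def by (simp add: sum_diff1 algebra_simps)

locale indep_matroid =
  fixes E :: "'a set" and indep :: "'a set \<Rightarrow> bool"
  assumes matroid: "matroid E indep"
begin

lemma finite_ground: "finite E"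
  using matroid by (simp add: matroid_def)

lemma indep_subset_ground: "indep X \<Longrightarrow> X \<subseteq> E"
  using matroid by (simp add: matroid_def)

lemma indep_finite: "indep X \<Longrightarrow> finite X"
  using indep_subset_ground finite_ground finite_subset by blast

lemma indep_empty: "indep {}"
  using matroid by (simp add: matroid_def)

lemma indep_subset: "indep X \<Longrightarrow> Y \<subseteq> X \<Longrightarrow> indep Y"
  using matroid by (simp add: matroid_def)

lemma indep_augment:
  "indep X \<Longrightarrow> indep Y \<Longrightarrow> card X < card Y \<Longrightarrow> \<exists>e \<in> Y - X. indep (insert e X)"
  using matroid by (simp add: matroid_def)

lemma indep_card_le_ground: "indep X \<Longrightarrow> card X \<le> card E"
  by (simp add: card_mono finite_ground indep_subset_ground)

lemma obtain_max_card_indep_between: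
  assumes "indep J" "J \<subseteq> S"
  obtains X where "indep X" "J \<subseteq> X" "X \<subseteq> S"
    "\<forall>Y. indep Y \<and> J \<subseteq> Y \<and> Y \<subseteq> S \<longrightarrow> card Y \<le> card X"
proof -
  have "\<exists>X. (indep X \<and> J \<subseteq> X \<and> X \<subseteq> S) \<and>
      (\<forall>Y. indep Y \<and> J \<subseteq> Y \<and> Y \<subseteq> S \<longrightarrow> card Y \<le> card X)"
    by (rule ex_has_greatest_nat[where b = "Suc (card E)"])
      (use assms indep_card_le_ground in \<open>auto simp: less_Suc_eq_le\<close>)
  with that show ?thesis by blast
qed

lemma indep_augment_within:
  assumes J: "indep J" "J \<subseteq> S" and I: "indep I" "I \<subseteq> S"
  obtains X where "indep X" "J \<subseteq> X" "X \<subseteq> S" "card I \<le> card X"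
proof -
  obtain X where X: "indep X" "J \<subseteq> X" "X \<subseteq> S"
    and max: "\<forall>Y. indep Y \<and> J \<subseteq> Y \<and> Y \<subseteq> S \<longrightarrow> card Y \<le> card X"
    by (rule obtain_max_card_indep_between[OF J])
  have "card I \<le> card X"
  proof (rule ccontr)
    assume "\<not> card I \<le> card X"
    then obtain e where e: "e \<in> I - X" "indep (insert e X)"
      using indep_augment[OF X(1) I(1)] by auto
    then have "card (insert e X) \<le> card X"
      using max X I(2) by blast
    then show False
      using e indep_finite[OF X(1)] by simp
  qed
  with X that show ?thesis by blast
qed

lemma basis_indep: "basis E indep B \<Longrightarrow> indep B"
  by (simp add: basis_def)

lemma basis_maximal: "basis E indep B \<Longrightarrow> indep X \<Longrightarrow> B \<subseteq> X \<Longrightarrow> X = B"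
  by (simp add: basis_def)

lemma indep_extend_basis:
  assumes "indep I"
  obtains B where "basis E indep B" "I \<subseteq> B"
proof -
  obtain X where X: "indep X" "I \<subseteq> X" "X \<subseteq> E"
    and max: "\<forall>Y. indep Y \<and> I \<subseteq> Y \<and> Y \<subseteq> E \<longrightarrow> card Y \<le> card X"
    by (rule obtain_max_card_indep_between[OF assms indep_subset_ground[OF assms]])
  have "basis E indep X"
    unfolding basis_def
  proof (intro conjI allI impI X(1))
    fix Y assume Y: "indep Y \<and> X \<subseteq> Y"
    then have "card Y \<le> card X"
      using max X(2) indep_subset_ground by blast
    moreover have "finite Y"
      using Y indep_finite by blast
    ultimately show "Y = X"
      using card_seteq Y by metis
  qed
  with X that show ?thesis by blast
qed

lemma basis_exists: "\<exists>B. basis E indep B"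
  using indep_extend_basis[OF indep_empty] by blast

lemma basis_of_indep_card:
  assumes B: "basis E indep B" and I: "indep I" and card: "card I = card B"
  shows "basis E indep I"
  unfolding basis_def
proof (intro conjI allI impI I)
  fix X assume X: "indep X \<and> I \<subseteq> X"
  show "X = I"
  proof (rule ccontr)
    assume "X \<noteq> I"
    with X have "I \<subset> X"
      by blast
    then have "card B < card X"
      using card indep_finite[of X] X psubset_card_mono by metis
    then obtain e where "e \<in> X - B" "indep (insert e B)"
      using indep_augment[OF basis_indep[OF B]] X by blast
    then show False
      using basis_maximal[OF B] by blast
  qed
qed

lemma circuit_dependent: "circuit E indep C \<Longrightarrow> \<not> indep C"
  by (simp add: circuit_def)

lemma circuit_subset_ground: "circuit E indep C \<Longrightarrow> C \<subseteq> E"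
  by (simp add: circuit_def)

lemma circuit_remove_indep: "circuit E indep C \<Longrightarrow> x \<in> C \<Longrightarrow> indep (C - {x})"
  by (simp add: circuit_def)

lemma dependent_contains_circuit:
  assumes "X \<subseteq> E" "\<not> indep X"
  obtains C where "C \<subseteq> X" "circuit E indep C"
proof -
  have "\<exists>C. (C \<subseteq> X \<and> \<not> indep C) \<and> (\<forall>Y. Y \<subseteq> X \<and> \<not> indep Y \<longrightarrow> card C \<le> card Y)"
    by (rule ex_has_least_nat[where k = X]) (use assms(2) in simp)
  then obtain C where C: "C \<subseteq> X" "\<not> indep C"
    and min: "\<forall>Y. Y \<subseteq> X \<and> \<not> indep Y \<longrightarrow> card C \<le> card Y"
    by blast
  have "finite C"
    using finite_subset[OF C(1) finite_subset[OF assms(1) finite_ground]] .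
  have "indep (C - {x})" if "x \<in> C" for x
  proof (rule ccontr)
    assume "\<not> indep (C - {x})"
    then have "card C \<le> card (C - {x})"
      using min C(1) by blast
    moreover have "card (C - {x}) < card C"
      using card_Diff1_less[OF \<open>finite C\<close> \<open>x \<in> C\<close>] .
    ultimately show False
      by linarith
  qed
  moreover have "C \<subseteq> E"
    using C(1) assms(1) by blast
  ultimately have "circuit E indep C"
    using C(2) unfolding circuit_def by blast
  with C(1) show ?thesis
    by (rule that)
qed

lemma circuit_not_subset_indep: "circuit E indep C \<Longrightarrow> indep X \<Longrightarrow> \<not> C \<subseteq> X"
  using indep_subset circuit_dependent by blast

lemma circuit_subset_eq:
  assumes "circuit E indep C1" "circuit E indep C2" "C1 \<subseteq> C2"
  shows "C1 = C2"
proof (rule ccontr)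
  assume "C1 \<noteq> C2"
  with assms(3) obtain x where "x \<in> C2" "C1 \<subseteq> C2 - {x}" by blast
  then show False
    using circuit_remove_indep[OF assms(2)] circuit_not_subset_indep[OF assms(1)] by blast
qed

text \<open>If (C1 \<union> C2) - e were independent, C1 - f (with f \<notin> C2) would extend inside C1 \<union> C2 to
  an independent set missing only one element; but it misses f and some element of C2.\<close>

lemma circuit_elimination:
  assumes C1: "circuit E indep C1" and C2: "circuit E indep C2" and "C1 \<noteq> C2"
    and e: "e \<in> C1" "e \<in> C2"
  shows "\<not> indep ((C1 \<union> C2) - {e})"
proof
  assume indep_I: "indep ((C1 \<union> C2) - {e})"
  let ?U = "C1 \<union> C2"
  have "?U \<subseteq> E"
    using circuit_subset_ground[OF C1] circuit_subset_ground[OF C2] by blast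
  then have fin: "finite ?U"
    using finite_ground finite_subset by blast
  obtain f where f: "f \<in> C1" "f \<notin> C2"
    using circuit_subset_eq[OF C1 C2] \<open>C1 \<noteq> C2\<close> by blast
  have "C1 - {f} \<subseteq> ?U" "?U - {e} \<subseteq> ?U"
    by blast+
  then obtain J where J: "indep J" "C1 - {f} \<subseteq> J" "J \<subseteq> ?U" "card (?U - {e}) \<le> card J"
    by (rule indep_augment_within[OF circuit_remove_indep[OF C1 f(1)] _ indep_I])
  have "f \<notin> J"
    using J(1,2) circuit_not_subset_indep[OF C1] by blast
  obtain g where g: "g \<in> C2" "g \<notin> J"
    using circuit_not_subset_indep[OF C2 J(1)] by blast
  have "f \<noteq> g" "{f, g} \<subseteq> ?U"
    using f g by blast+
  then have card_fg: "card {f, g} = 2"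
    by simp
  have "card J \<le> card (?U - {f, g})"
    using J(3) \<open>f \<notin> J\<close> g(2) fin by (intro card_mono) auto
  also have "\<dots> = card ?U - 2"
    using card_Diff_subset[OF _ \<open>{f, g} \<subseteq> ?U\<close>] card_fg by simp
  finally have "card J \<le> card ?U - 2" .
  moreover have "2 \<le> card ?U"
    using card_mono[OF fin \<open>{f, g} \<subseteq> ?U\<close>] card_fg by simp
  moreover have "card (?U - {e}) = card ?U - 1"
    using fin e(1) by (simp add: card_Diff_singleton)
  ultimately show False
    using J(4) by linarith
qed

lemma fundamental_circuit_exists:
  assumes B: "basis E indep B" and e: "e \<in> E" "e \<notin> B"
  obtains C where "circuit E indep C" "C \<subseteq> insert e B"
proof -
  have "insert e B \<subseteq> E"
    using e(1) indep_subset_ground[OF basis_indep[OF B]] by blast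
  moreover have "\<not> indep (insert e B)"
    using basis_maximal[OF B] e(2) by blast
  ultimately show ?thesis
    by (rule dependent_contains_circuit) (rule that)
qed

lemma fundamental_circuit_mem:
  "indep B \<Longrightarrow> circuit E indep C \<Longrightarrow> C \<subseteq> insert e B \<Longrightarrow> e \<in> C"
  using circuit_not_subset_indep by blast

lemma fundamental_circuit_unique:
  assumes B: "indep B" and C1: "circuit E indep C1" "C1 \<subseteq> insert e B"
    and C2: "circuit E indep C2" "C2 \<subseteq> insert e B"
  shows "C1 = C2"
proof (rule ccontr)
  assume "C1 \<noteq> C2"
  moreover have "e \<in> C1" "e \<in> C2"
    using fundamental_circuit_mem B C1 C2 by blast+
  ultimately have "\<not> indep ((C1 \<union> C2) - {e})"
    using circuit_elimination C1(1) C2(1) by blast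
  moreover have "(C1 \<union> C2) - {e} \<subseteq> B"
    using C1(2) C2(2) by blast
  ultimately show False
    using indep_subset[OF B] by blast
qed

lemma basis_exchange:
  assumes B: "basis E indep B" and e: "e \<in> E" "e \<notin> B"
    and C: "circuit E indep C" "C \<subseteq> insert e B" and f: "f \<in> C" "f \<in> B"
  shows "basis E indep (insert e (B - {f}))"
proof -
  have indep_B: "indep B"
    using basis_indep[OF B] .
  have "indep (insert e (B - {f}))"
  proof (rule ccontr)
    have "insert e (B - {f}) \<subseteq> E"
      using e(1) indep_subset_ground[OF indep_B] by blast
    moreover assume "\<not> indep (insert e (B - {f}))"
    ultimately obtain D where D: "D \<subseteq> insert e (B - {f})" "circuit E indep D"
      by (rule dependent_contains_circuit)
    have "D = C"
      using fundamental_circuit_unique[OF indep_B D(2) _ C] D(1) by blast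
    with D(1) f e(2) show False
      by blast
  qed
  moreover have "card (insert e (B - {f})) = card B"
    using card.remove[of B f] indep_finite[OF indep_B] e(2) f(2) by simp
  ultimately show ?thesis
    using basis_of_indep_card[OF B] by blast
qed

lemma basis_exchange_induct:
  assumes "basis E indep B\<^sub>0" "basis E indep B" "P B\<^sub>0"
    and exchange: "\<And>K e C f. basis E indep K \<Longrightarrow> P K \<Longrightarrow> e \<in> E \<Longrightarrow> e \<notin> K \<Longrightarrow>
      circuit E indep C \<Longrightarrow> C \<subseteq> insert e K \<Longrightarrow> f \<in> C \<Longrightarrow> f \<in> K \<Longrightarrow>
      P (insert e (K - {f}))"
  shows "P B"
proof -
  have "P B" if "basis E indep K" "P K" "card (B - K) = n" for n K
    using that
  proof (induction n arbitrary: K)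
    case 0
    then have "B \<subseteq> K"
      using indep_finite[OF basis_indep[OF assms(2)]] by simp
    then show ?case
      using basis_maximal[OF assms(2) basis_indep[OF "0.prems"(1)]] "0.prems"(2) by simp
  next
    case (Suc n)
    then have "B - K \<noteq> {}"
      by (metis card.empty Zero_not_Suc)
    then obtain e where e: "e \<in> B" "e \<notin> K"
      by blast
    have "e \<in> E"
      using e(1) indep_subset_ground[OF basis_indep[OF assms(2)]] by blast
    then obtain C where C: "circuit E indep C" "C \<subseteq> insert e K"
      using fundamental_circuit_exists[OF Suc.prems(1)] e(2) by blast
    then obtain f where f: "f \<in> C" "f \<notin> B"
      using circuit_not_subset_indep[OF C(1) basis_indep[OF assms(2)]] by blast
    with C(2) e(1) have "f \<in> K"
      by blast
    let ?K = "insert e (K - {f})"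
    have "B - ?K = (B - K) - {e}"
      using f(2) by blast
    then have "card (B - ?K) = n"
      using Suc.prems(3) e indep_finite[OF basis_indep[OF assms(2)]] by simp
    moreover have "basis E indep ?K"
      by (rule basis_exchange[OF Suc.prems(1) \<open>e \<in> E\<close> e(2) C f(1) \<open>f \<in> K\<close>])
    moreover have "P ?K"
      by (rule exchange[OF Suc.prems(1,2) \<open>e \<in> E\<close> e(2) C f(1) \<open>f \<in> K\<close>])
    ultimately show ?case
      using Suc.IH by blast
  qed
  with assms(1,3) show ?thesis
    by blast
qed

lemma fundamental_circuit_exchange:
  assumes B: "basis E indep B" and a: "a \<in> E" "a \<notin> B"
    and A: "circuit E indep A" "A \<subseteq> insert a B" and b: "b \<in> A" "b \<in> B"
    and e: "e \<notin> B" "e \<noteq> a"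
    and D: "circuit E indep D" "D \<subseteq> insert e B"
    and D': "circuit E indep D'" "D' \<subseteq> insert e (insert a (B - {b}))"
  shows "D' = D \<or> (b \<in> D \<and> D' \<subseteq> D \<union> A)"
proof -
  let ?B' = "insert a (B - {b})"
  have indep_B': "indep ?B'"
    using basis_indep[OF basis_exchange[OF B a A b]] .
  show ?thesis
  proof (cases "b \<in> D")
    case False
    with D(2) have "D \<subseteq> insert e ?B'"
      by blast
    then show ?thesis
      using fundamental_circuit_unique[OF indep_B' D(1) _ D'] by blast
  next
    case True
    have "e \<in> D"
      using fundamental_circuit_mem[OF basis_indep[OF B] D] .
    with A(2) e have "D \<noteq> A"
      by blast
    have "(D \<union> A) - {b} \<subseteq> E"
      using circuit_subset_ground[OF D(1)] circuit_subset_ground[OF A(1)] by blast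
    moreover have "\<not> indep ((D \<union> A) - {b})"
      using circuit_elimination[OF D(1) A(1) \<open>D \<noteq> A\<close> True b(1)] .
    ultimately obtain D'' where D'': "D'' \<subseteq> (D \<union> A) - {b}" "circuit E indep D''"
      by (rule dependent_contains_circuit)
    moreover have "D'' \<subseteq> insert e ?B'"
      using D''(1) A(2) D(2) by blast
    ultimately have "D'' = D'"
      using fundamental_circuit_unique[OF indep_B' _ _ D'] by blast
    with D'' True show ?thesis
      by blast
  qed
qed

lemma fundamental_circuits_monochromatic_exchange:
  assumes B: "basis E indep B" and mono: "fundamental_circuits_monochromatic E indep \<psi> B"
    and a: "a \<in> E" "a \<notin> B"
    and A: "circuit E indep A" "A \<subseteq> insert a B" and b: "b \<in> A" "b \<in> B"
  shows "fundamental_circuits_monochromatic E indep \<psi> (insert a (B - {b}))"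
  unfolding fundamental_circuits_monochromatic_def
proof (intro ballI allI impI)
  let ?B' = "insert a (B - {b})"
  fix e D' f
  assume e: "e \<in> E - ?B'" and D': "circuit E indep D' \<and> D' \<subseteq> insert e ?B'" and f: "f \<in> D'"
  have mono_A: "\<psi> x = \<psi> a" if "x \<in> A" for x
    using mono a A that unfolding fundamental_circuits_monochromatic_def by blast
  show "\<psi> f = \<psi> e"
  proof (cases "e = b")
    case True
    with b(2) have "insert e ?B' = insert a B"
      by blast
    then have "D' = A"
      using fundamental_circuit_unique[OF basis_indep[OF B] _ _ A] D' by simp
    with f b(1) True show ?thesis
      using mono_A[of f] mono_A[of b] by simp
  next
    case False
    with e have "e \<in> E" "e \<notin> B" "e \<noteq> a"
      by blast+
    then obtain D where D: "circuit E indep D" "D \<subseteq> insert e B"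
      using fundamental_circuit_exists[OF B] by blast
    have mono_D: "\<psi> x = \<psi> e" if "x \<in> D" for x
      using mono \<open>e \<in> E\<close> \<open>e \<notin> B\<close> D that unfolding fundamental_circuits_monochromatic_def by blast
    have "D' = D \<or> (b \<in> D \<and> D' \<subseteq> D \<union> A)"
      using fundamental_circuit_exchange[OF B a A b \<open>e \<notin> B\<close> \<open>e \<noteq> a\<close> D] D' by blast
    then show ?thesis
    proof
      assume "D' = D"
      with f show ?thesis
        using mono_D by blast
    next
      assume "b \<in> D \<and> D' \<subseteq> D \<union> A"
      then have "\<psi> a = \<psi> e" and "f \<in> D \<union> A"
        using mono_A[OF b(1)] mono_D[of b] f by auto
      then show ?thesis
        using mono_A[of f] mono_D[of f] by auto
    qed
  qed
qed

lemma fundamental_circuits_monochromatic_basis: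
  assumes "basis E indep B\<^sub>0" "fundamental_circuits_monochromatic E indep \<psi> B\<^sub>0"
    and "basis E indep B"
  shows "fundamental_circuits_monochromatic E indep \<psi> B"
  using basis_exchange_induct[OF assms(1,3), of "fundamental_circuits_monochromatic E indep \<psi>"]
    assms(2) fundamental_circuits_monochromatic_exchange by blast

lemma circuits_monochromatic_if_fundamental:
  assumes "basis E indep B\<^sub>0" "fundamental_circuits_monochromatic E indep \<psi> B\<^sub>0"
  shows "circuits_monochromatic E indep \<psi>"
  unfolding circuits_monochromatic_def
proof (intro allI impI ballI)
  fix C x y
  assume C: "circuit E indep C" and x: "x \<in> C" and y: "y \<in> C"
  obtain B where B: "basis E indep B" "C - {x} \<subseteq> B"
    using indep_extend_basis[OF circuit_remove_indep[OF C x]] .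
  have "x \<notin> B"
    using B circuit_not_subset_indep[OF C basis_indep[OF B(1)]] by blast
  moreover have "x \<in> E" "C \<subseteq> insert x B"
    using circuit_subset_ground[OF C] x B(2) by blast+
  moreover have "fundamental_circuits_monochromatic E indep \<psi> B"
    using fundamental_circuits_monochromatic_basis[OF assms B(1)] .
  ultimately show "\<psi> x = \<psi> y"
    using C y unfolding fundamental_circuits_monochromatic_def by (metis DiffI)
qed

lemma label_eq_if_circuits_monochromatic:
  fixes \<psi> :: "'a \<Rightarrow> 'g::ab_group_add"
  assumes mono: "circuits_monochromatic E indep \<psi>"
    and "basis E indep B\<^sub>0" "basis E indep B"
  shows "label \<psi> B = label \<psi> B\<^sub>0"
proof (rule basis_exchange_induct[OF assms(2,3), where P = "\<lambda>K. label \<psi> K = label \<psi> B\<^sub>0"])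
  fix K e C f
  assume K: "basis E indep K" "label \<psi> K = label \<psi> B\<^sub>0" and e: "e \<notin> K"
    and C: "circuit E indep C" "C \<subseteq> insert e K" and f: "f \<in> C" "f \<in> K"
  have "e \<in> C"
    using fundamental_circuit_mem[OF basis_indep[OF K(1)] C] .
  with mono C(1) f(1) have "\<psi> f = \<psi> e"
    unfolding circuits_monochromatic_def by blast
  moreover have "label \<psi> (insert e (K - {f})) = label \<psi> K - \<psi> f + \<psi> e"
    by (rule label_exchange[OF indep_finite[OF basis_indep[OF K(1)]] f(2) e])
  ultimately show "label \<psi> (insert e (K - {f})) = label \<psi> B\<^sub>0"
    using K(2) by simp
qed simp

lemma fundamental_circuits_monochromatic_if_label_invariant:
  fixes \<psi> :: "'a \<Rightarrow> 'g::ab_group_add"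
  assumes B: "basis E indep B"
    and inv: "\<forall>B'. basis E indep B' \<and> card (B - B') \<le> 1 \<longrightarrow> label \<psi> B' = label \<psi> B"
  shows "fundamental_circuits_monochromatic E indep \<psi> B"
  unfolding fundamental_circuits_monochromatic_def
proof (intro ballI allI impI)
  fix e C f
  assume e: "e \<in> E - B" and C: "circuit E indep C \<and> C \<subseteq> insert e B" and f: "f \<in> C"
  show "\<psi> f = \<psi> e"
  proof (cases "f = e")
    case False
    with C f have "f \<in> B"
      by blast
    let ?B' = "insert e (B - {f})"
    have "basis E indep ?B'"
      using basis_exchange[OF B _ _ _ _ f \<open>f \<in> B\<close>] e C by blast
    moreover have "B - ?B' = {f}"
      using \<open>f \<in> B\<close> e by blast
    ultimately have "label \<psi> ?B' = label \<psi> B"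
      using inv by simp
    moreover have "label \<psi> ?B' = label \<psi> B - \<psi> f + \<psi> e"
      using label_exchange[OF indep_finite[OF basis_indep[OF B]] \<open>f \<in> B\<close>] e by blast
    ultimately show ?thesis
      by simp
  qed simp
qed

lemma circuits_monochromatic_iff_components:
  "circuits_monochromatic E indep \<psi> \<longleftrightarrow>
    (\<forall>K \<in> components E indep. \<forall>x \<in> K. \<forall>y \<in> K. \<psi> x = \<psi> y)"
proof
  assume mono: "circuits_monochromatic E indep \<psi>"
  have same: "\<psi> y = \<psi> x" if "same_component E indep x y" for x y
    using that mono unfolding same_component_def circuits_monochromatic_def by auto
  show "\<forall>K \<in> components E indep. \<forall>x \<in> K. \<forall>y \<in> K. \<psi> x = \<psi> y"
  proof (intro ballI)
    fix K y z
    assume "K \<in> components E indep" "y \<in> K" "z \<in> K"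
    then obtain x where "same_component E indep x y" "same_component E indep x z"
      unfolding components_def by blast
    then show "\<psi> y = \<psi> z"
      using same by simp
  qed
next
  assume comp: "\<forall>K \<in> components E indep. \<forall>x \<in> K. \<forall>y \<in> K. \<psi> x = \<psi> y"
  show "circuits_monochromatic E indep \<psi>"
    unfolding circuits_monochromatic_def
  proof (intro allI impI ballI)
    fix C x y
    assume C: "circuit E indep C" and xy: "x \<in> C" "y \<in> C"
    let ?K = "{z. same_component E indep x z}"
    have "x \<in> E" "y \<in> E"
      using circuit_subset_ground[OF C] xy by blast+
    then have "?K \<in> components E indep"
      unfolding components_def by blast
    moreover have "x \<in> ?K" "y \<in> ?K"
      using C xy \<open>x \<in> E\<close> \<open>y \<in> E\<close> unfolding same_component_def by auto
    ultimately show "\<psi> x = \<psi> y"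
      by (rule comp[rule_format])
  qed
qed

end

theorem theorem3p1:
  fixes E :: "'a set" and indep :: "'a set \<Rightarrow> bool" and \<psi> :: "'a \<Rightarrow> 'g::ab_group_add"
  assumes "matroid E indep"
  shows "((\<forall>B B'. basis E indep B \<and> basis E indep B' \<longrightarrow> label \<psi> B = label \<psi> B')
          \<longleftrightarrow> (\<exists>B. basis E indep B \<and>
                 (\<forall>B'. basis E indep B' \<and> card (B - B') \<le> 1 \<longrightarrow> label \<psi> B' = label \<psi> B)))
       \<and> ((\<exists>B. basis E indep B \<and>
                 (\<forall>B'. basis E indep B' \<and> card (B - B') \<le> 1 \<longrightarrow> label \<psi> B' = label \<psi> B))
          \<longleftrightarrow> (\<forall>K \<in> components E indep. \<forall>x\<in>K. \<forall>y\<in>K. \<psi> x = \<psi> y))"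
    (is "(?all_equal \<longleftrightarrow> ?exchange_invariant) \<and> (_ \<longleftrightarrow> ?components)")
proof -
  interpret indep_matroid E indep
    by (rule indep_matroid.intro) (rule assms)
  have "?all_equal \<longrightarrow> ?exchange_invariant"
    using basis_exists by blast
  moreover have "?exchange_invariant \<longrightarrow> circuits_monochromatic E indep \<psi>"
    using fundamental_circuits_monochromatic_if_label_invariant
      circuits_monochromatic_if_fundamental by blast
  moreover have "circuits_monochromatic E indep \<psi> \<longrightarrow> ?all_equal"
    using label_eq_if_circuits_monochromatic by metis
  moreover have "circuits_monochromatic E indep \<psi> \<longleftrightarrow> ?components"
    by (rule circuits_monochromatic_iff_components)
  ultimately show ?thesis
    by argo
qed

end
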